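(* Let $l_n,R_n>0$ ($n\in\mathbb N$) satisfy $l_n,R_n\to\infty$, $l_n^2/n\to0$, $n/R_n\to0$, $e^{-\pi l_n/2}R_n\to0$, and let $W_n(z)=\exp\!\big(-l_n\pi-il_n\log\frac{z-n}{z+n}\big)$ for $z\in\mathbb C_+$. Then for all sufficiently large $n$, $$|W_n(z)|<e^{-\pi l_n/2}\quad\text{for all } z\in\mathbb C_+ \text{ with } |z|=R_n.$$
   Context: $\mathbb C_+=\{\operatorname{Im}z>0\}$. For $z\in\mathbb C_+$ one has $\frac{z-n}{z+n}\in\mathbb C_+$, and $\log$ denotes the branch with imaginary part in $(0,\pi)$. *)

theory Defs
  imports "HOL-Analysis.Analysis"
begin

text \<open>For z in the upper half plane and n > 0, (z-n)/(z+n) lies in the upper half plane,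
  where the principal logarithm Ln has imaginary part in (0, pi); so Ln is the branch
  of the paper.\<close>

definition W :: "(nat \<Rightarrow> real) \<Rightarrow> nat \<Rightarrow> complex \<Rightarrow> complex" where
  "W l n z = exp (- of_real (l n * pi) - \<i> * of_real (l n) * Ln ((z - of_nat n) / (z + of_nat n)))"

end

theory Submission
  imports Defs
begin

text \<open>Put \<open>w = (z - n)/(z + n)\<close>. Then \<open>|W\<^sub>n(z)| = exp (l\<^sub>n (arg w - \<pi>))\<close>, and
  \<open>Re w = (|z|\<^sup>2 - n\<^sup>2) / |z + n|\<^sup>2\<close> is positive as soon as \<open>|z| > n\<close>, so that \<open>arg w < \<pi>/2\<close>.\<close>

lemma Re_divide_diff_add_real_pos:
  fixes z :: complex and r :: real
  assumes "cmod z > \<bar>r\<bar>"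
  shows "Re ((z - of_real r) / (z + of_real r)) > 0"
proof -
  have "z + of_real r \<noteq> 0"
    using assms by (metis add_eq_0_iff norm_minus_cancel norm_of_real order_less_irrefl)
  moreover have "(Re z + r)\<^sup>2 + (Im z)\<^sup>2 = (cmod (z + of_real r))\<^sup>2"
    by (simp add: cmod_power2)
  ultimately have denom_pos: "(Re z + r)\<^sup>2 + (Im z)\<^sup>2 > 0"
    by simp
  have "r\<^sup>2 < (cmod z)\<^sup>2"
    using assms by (metis power2_abs abs_ge_zero power_strict_mono zero_less_numeral)
  have "Re ((z - of_real r) / (z + of_real r))
        = ((Re z)\<^sup>2 + (Im z)\<^sup>2 - r\<^sup>2) / ((Re z + r)\<^sup>2 + (Im z)\<^sup>2)"
    by (simp add: Re_divide power2_eq_square algebra_simps)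
  also have "(Re z)\<^sup>2 + (Im z)\<^sup>2 = (cmod z)\<^sup>2"
    by (simp add: cmod_power2)
  finally show ?thesis
    using denom_pos \<open>r\<^sup>2 < (cmod z)\<^sup>2\<close> by simp
qed

lemma norm_W_less:
  fixes l :: "nat \<Rightarrow> real"
  assumes l_pos: "l n > 0" and big: "cmod z > real n"
  shows "cmod (W l n z) < exp (- pi * l n / 2)"
proof -
  define w where "w = (z - of_nat n) / (z + of_nat n)"
  have "Re w > 0"
    using Re_divide_diff_add_real_pos[of "real n" z] big by (simp add: w_def)
  then have "\<bar>Im (Ln w)\<bar> < pi / 2"
    using Re_Ln_pos_lt[of w] by fastforce
  then have arg_bound: "l n * Im (Ln w) < l n * (pi / 2)"
    using l_pos by (simp add: abs_less_iff)
  have "cmod (W l n z) = exp (- l n * pi + l n * Im (Ln w))"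
    by (simp add: W_def w_def norm_exp_eq_Re)
  also have "\<dots> < exp (- pi * l n / 2)"
    using arg_bound by (simp add: algebra_simps)
  finally show ?thesis .
qed

theorem lemma4:
  fixes l R :: "nat \<Rightarrow> real"
  assumes l_pos: "\<And>n. l n > 0"
    and R_pos: "\<And>n. R n > 0"
    and l_inf: "filterlim l at_top sequentially"
    and R_inf: "filterlim R at_top sequentially"
    and l2_n: "(\<lambda>n. (l n)^2 / real n) \<longlonglongrightarrow> 0"
    and n_R: "(\<lambda>n. real n / R n) \<longlonglongrightarrow> 0"
    and exp_R: "(\<lambda>n. exp (- pi * l n / 2) * R n) \<longlonglongrightarrow> 0"
  shows "\<forall>\<^sub>F n in sequentially. \<forall>z. Im z > 0 \<and> cmod z = R n \<longrightarrow>
           cmod (W l n z) < exp (- pi * l n / 2)"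
proof -
  have "\<forall>\<^sub>F n in sequentially. real n / R n < 1"
    using n_R by (simp add: order_tendstoD(2))
  then show ?thesis
  proof (rule eventually_mono)
    fix n
    assume "real n / R n < 1"
    then have "real n < R n"
      using R_pos[of n] by (simp add: divide_less_eq)
    then show "\<forall>z. Im z > 0 \<and> cmod z = R n \<longrightarrow> cmod (W l n z) < exp (- pi * l n / 2)"
      using norm_W_less[of l n, OF l_pos] by auto
  qed
qed

end
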